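(* Let $Y$ be a random variable with values in $S_b$ such that $uYu^*$ has the same distribution as $Y$ for all $u\in\mathbb{O}(d)$, and let $x_0\in S_a$. Then almost surely $x_0+Y\in S_{a+b}$ if $a+b\le d$, and almost surely $x_0+Y\in S_d=\mathcal{P}_d$ if $a+b\ge d$. Furthermore, if $x_0\in S_c$ and $x_0+Y\in S_{a+b}$ almost surely for some integer $a$ with $a+b<d$, then $c=a$.
   Context: $\mathcal{P}_d$ is the cone of real symmetric positive definite $d\times d$ matrices and $\overline{\mathcal{P}_d}$ its closure; for $b=0,\ldots,d$, $S_b=\{x\in\overline{\mathcal{P}_d}:\operatorname{rank}x=b\}$. $\mathbb{O}(d)$ is the orthogonal group and $u^*$ the transpose. *)

theory Defs
  imports "HOL-Analysis.Analysis" "HOL-Probability.Probability"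
begin

definition psd_mat :: "real^'d^'d \<Rightarrow> bool" where
  "psd_mat x \<longleftrightarrow> transpose x = x \<and> (\<forall>v. 0 \<le> v \<bullet> (x *v v))"

definition pd_mat :: "real^'d^'d \<Rightarrow> bool" where
  "pd_mat x \<longleftrightarrow> transpose x = x \<and> (\<forall>v. v \<noteq> 0 \<longrightarrow> 0 < v \<bullet> (x *v v))"

definition S_rank :: "nat \<Rightarrow> (real^'d^'d) set" where
  "S_rank b = {x. psd_mat x \<and> rank x = b}"

end

theory Submission
  imports Defs "HOL-Computational_Algebra.Polynomial"
begin

(* Adding a positive semidefinite matrix intersects kernels, so the rank of x0 + Y depends on x0
   only through its kernel: x0 may be replaced by the sum of e e^T over an orthonormal basis of
   its row space, and these rank-one terms are added one at a time. Adding w w^T to a positive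
   semidefinite Q raises the rank by one unless ker Q is orthogonal to w. For unit vectors v, w
   in the kernel of the deterministic part X, the Householder reflection in w - v fixes X and
   maps v to w, so by orthogonal invariance the probability p that the rank of X + Y does not
   grow in direction w is the same for all such w. Take unit directions c 0, c 1, ... in ker X
   along a polynomial curve: a nonzero vector of ker X is orthogonal to at most L of them, and
   a nonzero kernel vector of X + Y is orthogonal to every direction in which the rank does not
   grow. Hence m p <= L for every m, and p = 0. *)

definition matrix_kernel :: "real^'n^'m \<Rightarrow> (real^'n) set" where
  "matrix_kernel A = {x. A *v x = 0}"

lemma subspace_matrix_kernel: "subspace (matrix_kernel A)"
  unfolding matrix_kernel_def subspace_def
  by (auto simp: matrix_vector_right_distrib matrix_vector_mult_scaleR)

lemma matrix_kernel_eq_orthogonal_rows: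
  "matrix_kernel (A::real^'n^'m) = {x. \<forall>r\<in>span (rows A). orthogonal r x}"
proof safe
  fix x r assume "x \<in> matrix_kernel A" "r \<in> span (rows A)"
  then show "orthogonal r x"
    using orthogonal_nullspace_rowspace[of A x r] by (simp add: matrix_kernel_def orthogonal_commute)
next
  fix x assume orth: "\<forall>r\<in>span (rows A). orthogonal r x"
  have "(A *v x) $ i = 0" for i
  proof -
    have "row i A \<in> span (rows A)" by (auto simp: rows_def intro: span_base)
    then have "row i A \<bullet> x = 0" using orth by (simp add: orthogonal_def)
    then show ?thesis by (simp add: matrix_vector_mult_def inner_vec_def row_def)
  qed
  then show "x \<in> matrix_kernel A" by (simp add: matrix_kernel_def vec_eq_iff)
qed

lemma rank_plus_dim_matrix_kernel: "rank (A::real^'n^'m) + dim (matrix_kernel A) = CARD('n)"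
proof -
  have "dim {y \<in> UNIV. \<forall>x \<in> span (rows A). orthogonal x y} + dim (span (rows A))
      = dim (UNIV :: (real^'n) set)"
    by (rule dim_subspace_orthogonal_to_vectors) auto
  then show ?thesis by (simp add: matrix_kernel_eq_orthogonal_rows[of A] row_rank_def add.commute)
qed

lemma rank_eq_if_matrix_kernel_eq:
  "matrix_kernel (A::real^'n^'m) = matrix_kernel B \<Longrightarrow> rank A = rank B"
  using rank_plus_dim_matrix_kernel[of A] rank_plus_dim_matrix_kernel[of B] by simp

lemma rank_orthogonal_conj:
  fixes U A :: "real^'n^'n"
  assumes "orthogonal_matrix U"
  shows "rank (U ** A ** transpose U) = rank A"
proof (rule antisym)
  show "rank (U ** A ** transpose U) \<le> rank A"
    by (metis le_trans rank_mul_le_left rank_mul_le_right)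
  have "transpose U ** (U ** A ** transpose U) ** U = (transpose U ** U) ** A ** (transpose U ** U)"
    by (simp add: matrix_mul_assoc)
  then have "A = transpose U ** (U ** A ** transpose U) ** U"
    using assms by (simp add: orthogonal_matrix_def)
  then show "rank A \<le> rank (U ** A ** transpose U)"
    by (metis le_trans matrix_mul_assoc rank_mul_le_left rank_mul_le_right)
qed

lemma matrix_add_rdistrib: "(B + C) ** A = B ** A + C ** A"
  by (vector matrix_matrix_mult_def sum.distrib[symmetric] field_simps)

lemma symmetric_matrix_inner_swap:
  fixes A :: "real^'n^'n"
  assumes "transpose A = A"
  shows "x \<bullet> (A *v y) = (A *v x) \<bullet> y"
proof -
  have "x \<bullet> (A *v y) = (transpose A *v x) \<bullet> y"
    by (simp add: dot_lmul_matrix[symmetric])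
  then show ?thesis using assms by simp
qed

lemma psd_mat_quadratic_form_zero:
  assumes "psd_mat A" "x \<bullet> (A *v x) = 0"
  shows "A *v x = 0"
proof (rule ccontr)
  assume "A *v x \<noteq> 0"
  \<comment> \<open>the form is negative at \<open>x + t *\<^sub>R A x\<close> for a suitable \<open>t < 0\<close>\<close>
  define w where "w = A *v x"
  define a where "a = w \<bullet> w"
  define c where "c = w \<bullet> (A *v w)"
  define t where "t = - a / (c + 1)"
  have sym: "transpose A = A" and pos: "\<And>v. 0 \<le> v \<bullet> (A *v v)"
    using assms(1) unfolding psd_mat_def by auto
  have "a > 0" using \<open>A *v x \<noteq> 0\<close> by (simp add: a_def w_def)
  have "c \<ge> 0" using pos by (simp add: c_def)
  have xw: "x \<bullet> (A *v w) = a"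
    using symmetric_matrix_inner_swap[OF sym, of x w] by (simp add: a_def w_def)
  have wx: "w \<bullet> (A *v x) = a" by (simp add: a_def w_def)
  have "0 \<le> (x + t *\<^sub>R w) \<bullet> (A *v (x + t *\<^sub>R w))" using pos by blast
  also have "\<dots> = t * (2 * a + t * c)"
    using assms(2) xw wx
    by (simp add: matrix_vector_right_distrib matrix_vector_mult_scaleR inner_add_left
        inner_add_right c_def algebra_simps)
  also have "\<dots> < 0"
  proof (rule mult_neg_pos)
    show "t < 0" using \<open>a > 0\<close> \<open>c \<ge> 0\<close> by (simp add: t_def)
    have "- t * c \<le> a"
      using \<open>a > 0\<close> \<open>c \<ge> 0\<close> by (simp add: t_def field_simps)
    then show "0 < 2 * a + t * c" using \<open>a > 0\<close> by linarith
  qed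
  finally show False by simp
qed

lemma psd_mat_0: "psd_mat (0::real^'n^'n)"
  unfolding psd_mat_def by (simp add: transpose_def vec_eq_iff)

lemma transpose_add: "transpose (A + B) = transpose A + transpose B"
  by (simp add: transpose_def vec_eq_iff)

lemma psd_mat_add: "psd_mat A \<Longrightarrow> psd_mat B \<Longrightarrow> psd_mat (A + B)"
  unfolding psd_mat_def
  by (simp add: transpose_add matrix_vector_mult_add_rdistrib inner_add_right)

lemma matrix_kernel_psd_add:
  assumes "psd_mat A" "psd_mat B"
  shows "matrix_kernel (A + B) = matrix_kernel A \<inter> matrix_kernel B"
proof
  show "matrix_kernel A \<inter> matrix_kernel B \<subseteq> matrix_kernel (A + B)"
    by (auto simp: matrix_kernel_def matrix_vector_mult_add_rdistrib)
  show "matrix_kernel (A + B) \<subseteq> matrix_kernel A \<inter> matrix_kernel B"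
  proof
    fix x assume "x \<in> matrix_kernel (A + B)"
    then have "x \<bullet> (A *v x) + x \<bullet> (B *v x) = 0"
      by (simp add: matrix_kernel_def matrix_vector_mult_add_rdistrib inner_add_right[symmetric])
    moreover have "0 \<le> x \<bullet> (A *v x)" "0 \<le> x \<bullet> (B *v x)"
      using assms unfolding psd_mat_def by auto
    ultimately have "x \<bullet> (A *v x) = 0" "x \<bullet> (B *v x) = 0" by linarith+
    then show "x \<in> matrix_kernel A \<inter> matrix_kernel B"
      using psd_mat_quadratic_form_zero[OF assms(1)] psd_mat_quadratic_form_zero[OF assms(2)]
      by (simp add: matrix_kernel_def)
  qed
qed

section \<open>Rank-one updates of positive semidefinite matrices\<close>

definition outer :: "real^'n \<Rightarrow> real^'m \<Rightarrow> real^'m^'n" where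
  "outer v w = (\<chi> i j. v$i * w$j)"

lemma outer_mult: "outer v w *v x = (w \<bullet> x) *\<^sub>R v"
  by (simp add: outer_def matrix_vector_mult_def inner_vec_def sum_distrib_left vec_eq_iff
      algebra_simps)

lemma transpose_outer: "transpose (outer v w) = outer w v"
  by (simp add: outer_def transpose_def vec_eq_iff)

lemma outer_zero_left [simp]: "outer 0 w = 0"
  by (simp add: outer_def vec_eq_iff)

lemma matrix_mul_outer_mul_transpose:
  "A ** outer v w ** transpose B = outer (A *v v) (B *v w)"
proof (rule iffD2[OF matrix_eq], rule allI)
  fix x
  have "(A ** outer v w ** transpose B) *v x = A *v ((w \<bullet> (transpose B *v x)) *\<^sub>R v)"
    by (simp add: matrix_vector_mul_assoc[symmetric] outer_mult)
  also have "\<dots> = ((B *v w) \<bullet> x) *\<^sub>R (A *v v)"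
    by (metis dot_lmul_matrix inner_commute matrix_vector_mult_scaleR transpose_matrix_vector)
  finally show "(A ** outer v w ** transpose B) *v x = outer (A *v v) (B *v w) *v x"
    by (simp add: outer_mult)
qed

lemma psd_mat_outer: "psd_mat (outer v v)"
  unfolding psd_mat_def by (simp add: transpose_outer outer_mult inner_commute)

lemma matrix_kernel_outer: "matrix_kernel (outer v v) = {x. v \<bullet> x = 0}"
  by (auto simp: matrix_kernel_def outer_mult)

lemma matrix_kernel_psd_add_outer:
  "psd_mat Q \<Longrightarrow> matrix_kernel (Q + outer v v) = matrix_kernel Q \<inter> {x. v \<bullet> x = 0}"
  by (simp add: matrix_kernel_psd_add psd_mat_outer matrix_kernel_outer)

lemma rank_psd_add_outer_ge:
  fixes Q :: "real^'n^'n"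
  assumes "psd_mat Q"
  shows "rank Q \<le> rank (Q + outer v v)"
proof -
  have "dim (matrix_kernel (Q + outer v v)) \<le> dim (matrix_kernel Q)"
    using matrix_kernel_psd_add_outer[OF assms] by (intro dim_subset) auto
  then show ?thesis
    using rank_plus_dim_matrix_kernel[of Q] rank_plus_dim_matrix_kernel[of "Q + outer v v"]
    by linarith
qed

lemma rank_psd_add_outer_le:
  fixes Q :: "real^'n^'n"
  assumes "psd_mat Q"
  shows "rank (Q + outer v v) \<le> Suc (rank Q)"
proof (cases "v = 0")
  case False
  let ?K = "matrix_kernel Q" and ?H = "{x. v \<bullet> x = 0}"
  have "dim {x + y |x y. x \<in> ?K \<and> y \<in> ?H} + dim (?K \<inter> ?H) = dim ?K + dim ?H"
    by (rule dim_sums_Int) (auto simp: subspace_matrix_kernel subspace_hyperplane)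
  moreover have "dim ?H = CARD('n) - 1" using dim_hyperplane[OF False] by simp
  moreover have "dim {x + y |x y. x \<in> ?K \<and> y \<in> ?H} \<le> CARD('n)"
    by (rule dim_subset_UNIV_cart)
  ultimately have "dim ?K \<le> Suc (dim (matrix_kernel (Q + outer v v)))"
    using matrix_kernel_psd_add_outer[OF assms] by (simp add: Suc_le_eq)
  then show ?thesis
    using rank_plus_dim_matrix_kernel[of Q] rank_plus_dim_matrix_kernel[of "Q + outer v v"]
    by linarith
qed simp

lemma rank_psd_add_outer_eq_iff:
  fixes Q :: "real^'n^'n"
  assumes "psd_mat Q"
  shows "rank (Q + outer v v) = rank Q \<longleftrightarrow> matrix_kernel Q \<subseteq> {x. v \<bullet> x = 0}"
proof
  assume "rank (Q + outer v v) = rank Q"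
  then have "dim (matrix_kernel (Q + outer v v)) = dim (matrix_kernel Q)"
    using rank_plus_dim_matrix_kernel[of Q] rank_plus_dim_matrix_kernel[of "Q + outer v v"]
    by linarith
  then have "matrix_kernel (Q + outer v v) = matrix_kernel Q"
    using matrix_kernel_psd_add_outer[OF assms]
    by (intro subspace_dim_equal subspace_matrix_kernel) auto
  then show "matrix_kernel Q \<subseteq> {x. v \<bullet> x = 0}"
    using matrix_kernel_psd_add_outer[OF assms] by blast
next
  assume "matrix_kernel Q \<subseteq> {x. v \<bullet> x = 0}"
  then have "matrix_kernel (Q + outer v v) = matrix_kernel Q"
    using matrix_kernel_psd_add_outer[OF assms] by blast
  then show "rank (Q + outer v v) = rank Q" by (rule rank_eq_if_matrix_kernel_eq)
qed

definition outer_sum :: "(real^'n) set \<Rightarrow> real^'n^'n" where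
  "outer_sum E = (\<Sum>e\<in>E. outer e e)"

lemma outer_sum_insert:
  "finite E \<Longrightarrow> w \<notin> E \<Longrightarrow> outer_sum (insert w E) = outer_sum E + outer w w"
  by (simp add: outer_sum_def add.commute)

lemma psd_mat_outer_sum: "finite E \<Longrightarrow> psd_mat (outer_sum E)"
  by (induction E rule: finite_induct)
    (simp_all add: outer_sum_def psd_mat_0 psd_mat_add psd_mat_outer)

lemma matrix_kernel_outer_sum:
  "finite E \<Longrightarrow> matrix_kernel (outer_sum E) = {x. \<forall>e\<in>E. e \<bullet> x = 0}"
proof (induction E rule: finite_induct)
  case empty
  then show ?case by (simp add: outer_sum_def matrix_kernel_def)
next
  case (insert w E)
  then show ?case
    by (auto simp: outer_sum_insert matrix_kernel_psd_add_outer psd_mat_outer_sum)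
qed

lemma matrix_kernel_outer_sum_eq:
  assumes "finite E" "span E = span (rows X)"
  shows "matrix_kernel (outer_sum E) = matrix_kernel X"
proof -
  have "(\<forall>e\<in>E. e \<bullet> x = 0) \<longleftrightarrow> (\<forall>r\<in>span E. orthogonal r x)" for x
  proof
    assume "\<forall>e\<in>E. e \<bullet> x = 0"
    then have "orthogonal x e" if "e \<in> E" for e
      using that by (simp add: orthogonal_def inner_commute)
    then have "orthogonal x r" if "r \<in> span E" for r
      using orthogonal_to_span[OF that] by blast
    then show "\<forall>r\<in>span E. orthogonal r x" by (simp add: orthogonal_commute)
  qed (simp add: orthogonal_def span_base)
  then show ?thesis
    unfolding matrix_kernel_outer_sum[OF assms(1)] matrix_kernel_eq_orthogonal_rows[of X]
      assms(2)[symmetric] by simp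
qed

section \<open>Householder reflections\<close>

definition householder :: "real^'n \<Rightarrow> real^'n^'n" where
  "householder z = mat 1 - (2 / (z \<bullet> z)) *\<^sub>R outer z z"

lemma householder_mult: "householder z *v v = v - (2 * (z \<bullet> v) / (z \<bullet> z)) *\<^sub>R z"
  by (simp add: householder_def matrix_vector_mult_diff_rdistrib
      scaleR_matrix_vector_assoc[symmetric] outer_mult)

lemma transpose_householder: "transpose (householder z) = householder z"
  by (simp add: householder_def transpose_def outer_def mat_def vec_eq_iff mult.commute)

lemma householder_involutive: "householder z *v (householder z *v v) = v"
proof (cases "z = 0")
  case False
  then have "z \<bullet> z \<noteq> 0" by simp
  then have "z \<bullet> (householder z *v v) = - (z \<bullet> v)"
    by (simp add: householder_mult inner_diff_right)
  then have "householder z *v (householder z *v v)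
      = householder z *v v + (2 * (z \<bullet> v) / (z \<bullet> z)) *\<^sub>R z"
    by (simp only: householder_mult[of z "householder z *v v"]) simp
  then show ?thesis by (simp add: householder_mult)
qed (simp add: householder_mult)

lemma orthogonal_matrix_householder: "orthogonal_matrix (householder z)"
proof -
  have "householder z ** householder z = mat 1"
    by (simp add: matrix_eq matrix_vector_mul_assoc[symmetric] householder_involutive)
  then show ?thesis by (simp add: orthogonal_matrix transpose_householder)
qed

lemma householder_fixes_orthogonal: "z \<bullet> v = 0 \<Longrightarrow> householder z *v v = v"
  by (simp add: householder_mult)

lemma householder_swaps:
  assumes "norm a = norm b"
  shows "householder (a - b) *v a = b"
proof (cases "a = b")
  case False
  have "a \<bullet> a = b \<bullet> b" using assms by (simp add: dot_square_norm)
  then have zz: "(a - b) \<bullet> (a - b) = 2 * ((a - b) \<bullet> a)"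
    by (simp add: inner_diff_left inner_diff_right inner_commute)
  moreover have "(a - b) \<bullet> (a - b) \<noteq> 0" using False by simp
  ultimately have "(a - b) \<bullet> a \<noteq> 0" by (metis mult_zero_right)
  then have "2 * ((a - b) \<bullet> a) / ((a - b) \<bullet> (a - b)) = 1" by (simp only: zz) simp
  then have "householder (a - b) *v a = a - 1 *\<^sub>R (a - b)" by (simp only: householder_mult)
  then show ?thesis by simp
qed (simp add: householder_mult)

lemma householder_conj_fixes:
  assumes "transpose X = X" "X *v z = 0"
  shows "householder z ** X ** transpose (householder z) = X"
proof (rule iffD2[OF matrix_eq], rule allI)
  fix v
  have "z \<bullet> (X *v v) = 0"
    using symmetric_matrix_inner_swap[OF assms(1)] assms(2) by simp
  moreover have "X *v (householder z *v v) = X *v v"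
    by (simp add: householder_mult matrix_vector_mult_diff_distrib matrix_vector_mult_scaleR assms(2))
  ultimately have "householder z *v (X *v (householder z *v v)) = X *v v"
    by (simp add: householder_fixes_orthogonal)
  then show "(householder z ** X ** transpose (householder z)) *v v = X *v v"
    by (simp add: matrix_mul_assoc matrix_vector_mul_assoc transpose_householder)
qed

section \<open>Measurability of the rank\<close>

lemma open_injective_on_subspace:
  fixes S :: "(real^'n) set"
  assumes "subspace S"
  shows "open {A::real^'n^'m. \<forall>x\<in>S. A *v x = 0 \<longrightarrow> x = 0}"
proof -
  let ?K = "S \<inter> sphere 0 1" and ?Z = "{p::(real^'n) \<times> (real^'n^'m). snd p *v fst p = 0}"
  have "continuous_on UNIV (\<lambda>p::(real^'n) \<times> (real^'n^'m). snd p *v fst p)"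
    unfolding matrix_vector_mult_def by (intro continuous_intros)
  then have "closed ?Z" by (rule closed_Collect_eq[OF _ continuous_on_const])
  moreover have "compact ?K"
    using closed_subspace[OF assms] by (intro closed_Int_compact compact_sphere)
  ultimately have closed_proj: "closed {A. \<exists>x. x \<in> ?K \<and> (x, A) \<in> ?Z}"
    by (intro closed_compact_projection)
  have "(\<forall>x\<in>S. A *v x = 0 \<longrightarrow> x = 0) \<longleftrightarrow> (\<forall>x\<in>?K. A *v x \<noteq> 0)" for A
  proof
    assume "\<forall>x\<in>?K. A *v x \<noteq> 0"
    then have no_unit_zero: "\<And>x. x \<in> S \<Longrightarrow> norm x = 1 \<Longrightarrow> A *v x \<noteq> 0" by simp
    show "\<forall>x\<in>S. A *v x = 0 \<longrightarrow> x = 0"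
    proof (intro ballI impI, rule ccontr)
      fix x assume "x \<in> S" "A *v x = 0" "x \<noteq> 0"
      then show False
        using no_unit_zero[of "(1 / norm x) *\<^sub>R x"] assms
        by (simp add: subspace_scale matrix_vector_mult_scaleR)
    qed
  next
    assume "\<forall>x\<in>S. A *v x = 0 \<longrightarrow> x = 0"
    then show "\<forall>x\<in>?K. A *v x \<noteq> 0" by fastforce
  qed
  then have "{A. \<forall>x\<in>S. A *v x = 0 \<longrightarrow> x = 0} = - {A. \<exists>x. x \<in> ?K \<and> (x, A) \<in> ?Z}"
    by (simp only: set_eq_iff mem_Collect_eq Compl_iff prod.sel) blast
  then show ?thesis using closed_proj by (simp add: open_Compl)
qed

lemma le_rank_iff_injective_on_subspace:
  fixes A :: "real^'n^'m"
  shows "k \<le> rank A \<longleftrightarrow> (\<exists>S. subspace S \<and> dim S = k \<and> (\<forall>x\<in>S. A *v x = 0 \<longrightarrow> x = 0))"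
proof
  assume "k \<le> rank A"
  then obtain S where "subspace S" "S \<subseteq> span (rows A)" "dim S = k"
    by (metis choose_subspace_of_subspace row_rank_def)
  then show "\<exists>S. subspace S \<and> dim S = k \<and> (\<forall>x\<in>S. A *v x = 0 \<longrightarrow> x = 0)"
    using nullspace_inter_rowspace by blast
next
  assume "\<exists>S. subspace S \<and> dim S = k \<and> (\<forall>x\<in>S. A *v x = 0 \<longrightarrow> x = 0)"
  then obtain S where S: "subspace S" "dim S = k" "\<forall>x\<in>S. A *v x = 0 \<longrightarrow> x = 0" by blast
  have "inj_on ((*v) A) S"
  proof (rule inj_onI)
    fix x y assume "x \<in> S" "y \<in> S" "A *v x = A *v y"
    then show "x = y"
      using S by (metis eq_iff_diff_eq_0 matrix_vector_mult_diff_distrib subspace_diff)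
  qed
  then have "dim ((*v) A ` S) = k"
    using S(2) dim_image_eq[OF matrix_vector_mul_linear] by (metis S(1) span_eq_iff)
  moreover have "dim ((*v) A ` S) \<le> dim (range ((*v) A))" by (rule dim_subset) auto
  ultimately show "k \<le> rank A" by (simp add: rank_dim_range)
qed

lemma open_le_rank: "open {A::real^'n^'m. k \<le> rank A}"
proof -
  have "{A::real^'n^'m. k \<le> rank A}
      = (\<Union>S\<in>{S. subspace S \<and> dim S = k}. {A. \<forall>x\<in>S. A *v x = 0 \<longrightarrow> x = 0})"
    by (auto simp: le_rank_iff_injective_on_subspace)
  then show ?thesis by (auto intro!: open_UN open_injective_on_subspace)
qed

lemma measurable_rank:
  "(rank :: real^'n^'m \<Rightarrow> nat) \<in> borel \<rightarrow>\<^sub>M count_space UNIV"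
proof -
  have "rank -` {k} = {A::real^'n^'m. k \<le> rank A} - {A. Suc k \<le> rank A}" for k by auto
  then have "rank -` {k} \<in> sets (borel :: (real^'n^'m) measure)" for k
    by (simp only:) (intro sets.Diff borel_open open_le_rank)
  then show ?thesis by (simp add: measurable_count_space_eq2_countable)
qed

lemma measurable_rank_continuous:
  "continuous_on UNIV f \<Longrightarrow> (\<lambda>y. rank (f y :: real^'n^'m)) \<in> borel \<rightarrow>\<^sub>M count_space UNIV"
  using borel_measurable_continuous_onI measurable_compose measurable_rank by blast

lemma sets_rank_add_outer_unchanged:
  "{y::real^'n^'n. rank (X + y + outer v v) = rank (X + y)} \<in> sets borel"
proof -
  have "(\<lambda>y. rank (X + y + outer v v :: real^'n^'n)) \<in> borel \<rightarrow>\<^sub>M count_space UNIV"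
    "(\<lambda>y. rank (X + y :: real^'n^'n)) \<in> borel \<rightarrow>\<^sub>M count_space UNIV"
    by (intro measurable_rank_continuous continuous_intros)+
  note this[measurable]
  have "{y::real^'n^'n. rank (X + y + outer v v) = rank (X + y)}
      = {y \<in> space borel. \<exists>k::nat. rank (X + y + outer v v) = k \<and> rank (X + y) = k}"
    by auto
  also have "\<dots> \<in> sets borel" by measurable
  finally show ?thesis .
qed

section \<open>Counting events of bounded overlap\<close>

lemma (in prob_space) prob_eq_0_if_bounded_overlap:
  fixes A :: "nat \<Rightarrow> 'a set"
  assumes events: "\<And>t. A t \<in> events" and prob_eq: "\<And>t. prob (A t) = q"
    and overlap_finite: "\<And>\<omega>. \<omega> \<in> space M \<Longrightarrow> finite {t. \<omega> \<in> A t}"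
    and overlap_bound: "\<And>\<omega>. \<omega> \<in> space M \<Longrightarrow> card {t. \<omega> \<in> A t} \<le> L"
  shows "q = 0"
proof -
  have integrable: "integrable M (indicator (A t) :: 'a \<Rightarrow> real)" for t
    using events by (simp add: emeasure_eq_measure)
  have sum_bound: "real m * q \<le> real L" for m
  proof -
    have "real m * q = (\<Sum>t<m. prob (A t))" by (simp add: prob_eq)
    also have "\<dots> = expectation (\<lambda>\<omega>. \<Sum>t<m. indicator (A t) \<omega>)"
      using events integrable by (simp add: Int_absorb2 sets.sets_into_space)
    also have "\<dots> \<le> expectation (\<lambda>\<omega>. real L)"
    proof (rule integral_mono)
      fix \<omega> assume "\<omega> \<in> space M"
      have "(\<Sum>t<m. indicator (A t) \<omega> :: real) = real (card ({..<m} \<inter> {t. \<omega> \<in> A t}))"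
        by (simp add: indicator_def of_bool_def[symmetric])
      also have "card ({..<m} \<inter> {t. \<omega> \<in> A t}) \<le> card {t. \<omega> \<in> A t}"
        using overlap_finite[OF \<open>\<omega> \<in> space M\<close>] by (intro card_mono) auto
      finally show "(\<Sum>t<m. indicator (A t) \<omega> :: real) \<le> real L"
        using overlap_bound[OF \<open>\<omega> \<in> space M\<close>] by linarith
    qed (use integrable in auto)
    finally show ?thesis by (simp add: prob_space)
  qed
  show ?thesis
  proof (rule ccontr)
    assume "q \<noteq> 0"
    with prob_eq[of 0] have "q > 0" by (metis measure_nonneg order_less_le)
    moreover obtain m :: nat where "real L / q < real m" using reals_Archimedean2 by blast
    ultimately show False using sum_bound[of m] by (simp add: field_simps)
  qed
qed

section \<open>Curves of directions meeting each hyperplane finitely often\<close>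

lemma polynomial_curve_zeros:
  fixes f :: "nat \<Rightarrow> 'a::real_inner"
  assumes "j < n" "f j \<bullet> x \<noteq> 0"
  shows "finite {s::real. (\<Sum>j<n. s ^ j *\<^sub>R f j) \<bullet> x = 0}"
    and "card {s::real. (\<Sum>j<n. s ^ j *\<^sub>R f j) \<bullet> x = 0} \<le> n"
proof -
  define p where "p = (\<Sum>j<n. monom (f j \<bullet> x) j)"
  have coeff_p: "coeff p i = (if i < n then f i \<bullet> x else 0)" for i
  proof -
    have "coeff p i = (\<Sum>j<n. if i = j then f j \<bullet> x else 0)"
      unfolding p_def coeff_sum by (intro sum.cong) (auto simp: coeff_monom)
    then show ?thesis by (simp add: sum.delta)
  qed
  have "p \<noteq> 0" using assms coeff_p[of j] by auto
  have "degree p \<le> n" by (rule degree_le) (simp add: coeff_p)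
  have zeros_eq: "{s. (\<Sum>j<n. s ^ j *\<^sub>R f j) \<bullet> x = 0} = {s. poly p s = 0}"
    by (simp add: p_def poly_sum poly_monom inner_sum_left mult.commute)
  show "finite {s::real. (\<Sum>j<n. s ^ j *\<^sub>R f j) \<bullet> x = 0}"
    unfolding zeros_eq using \<open>p \<noteq> 0\<close> by (rule poly_roots_finite)
  show "card {s::real. (\<Sum>j<n. s ^ j *\<^sub>R f j) \<bullet> x = 0} \<le> n"
    unfolding zeros_eq using card_poly_roots_bound[OF \<open>p \<noteq> 0\<close>] \<open>degree p \<le> n\<close> by linarith
qed

lemma polynomial_curve_in_subspace:
  fixes V :: "'a::euclidean_space set"
  assumes "subspace V" "V \<noteq> {0}"
  obtains c :: "real \<Rightarrow> 'a" and n :: nat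
  where "\<And>s. c s \<in> V" "\<And>s. c s \<noteq> 0"
    and "\<And>x. x \<in> V \<Longrightarrow> x \<noteq> 0 \<Longrightarrow> finite {s. c s \<bullet> x = 0}"
    and "\<And>x. x \<in> V \<Longrightarrow> x \<noteq> 0 \<Longrightarrow> card {s. c s \<bullet> x = 0} \<le> n"
proof -
  obtain B where B: "0 \<notin> B" "pairwise orthogonal B" "independent B" "span B = V"
    using orthogonal_basis_subspace[OF assms(1)] by metis
  define n where "n = card B"
  obtain f where f: "bij_betw f {..<n} B"
    using ex_bij_betw_nat_finite[OF finiteI_independent[OF B(3)]]
    by (auto simp: n_def lessThan_atLeast0)
  have "B \<noteq> {}" using B(4) assms(2) by auto
  then have "0 < n" using finiteI_independent[OF B(3)] by (simp add: n_def card_gt_0_iff)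
  define c where "c s = (\<Sum>j<n. s ^ j *\<^sub>R f j)" for s
  show ?thesis
  proof
    show "c s \<in> V" for s
      unfolding c_def B(4)[symmetric] using f
      by (intro span_sum span_scale span_base) (auto simp: bij_betw_def)
    have "f 0 \<bullet> f j = 0" if "j < n" "j \<noteq> 0" for j
    proof -
      have "f 0 \<noteq> f j" "f 0 \<in> B" "f j \<in> B"
        using f that \<open>0 < n\<close> by (auto simp: bij_betw_def inj_on_def)
      then show ?thesis using B(2) by (auto simp: pairwise_def orthogonal_def)
    qed
    then have "(\<Sum>j<n. s ^ j * (f 0 \<bullet> f j)) = (\<Sum>j<n. if j = 0 then f 0 \<bullet> f 0 else 0)" for s
      by (intro sum.cong) auto
    then have "f 0 \<bullet> c s = f 0 \<bullet> f 0" for s using \<open>0 < n\<close> by (simp add: c_def inner_sum_right)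
    moreover have "f 0 \<noteq> 0" using B(1) f \<open>0 < n\<close> by (auto simp: bij_betw_def)
    ultimately show "c s \<noteq> 0" for s by (metis inner_zero_right inner_eq_zero_iff)
    fix x assume "x \<in> V" "x \<noteq> 0"
    have "\<exists>j<n. f j \<bullet> x \<noteq> 0"
    proof (rule ccontr)
      assume "\<not> (\<exists>j<n. f j \<bullet> x \<noteq> 0)"
      then have "orthogonal x b" if "b \<in> B" for b
        using that f by (auto simp: orthogonal_def inner_commute bij_betw_def)
      then have "orthogonal x x" using \<open>x \<in> V\<close> B(4) orthogonal_to_span by blast
      then show False using \<open>x \<noteq> 0\<close> by (simp add: orthogonal_def)
    qed
    then obtain j where "j < n" "f j \<bullet> x \<noteq> 0" by blast
    from polynomial_curve_zeros[where f = f, OF this, folded c_def]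
    show "finite {s. c s \<bullet> x = 0}" "card {s. c s \<bullet> x = 0} \<le> n" .
  qed
qed

lemma unit_curve_in_subspace:
  fixes V :: "'a::euclidean_space set"
  assumes "subspace V" "V \<noteq> {0}"
  obtains w :: "nat \<Rightarrow> 'a" and L :: nat
  where "\<And>t. w t \<in> V" "\<And>t. norm (w t) = 1"
    and "\<And>x. x \<in> V \<Longrightarrow> x \<noteq> 0 \<Longrightarrow> finite {t. w t \<bullet> x = 0}"
    and "\<And>x. x \<in> V \<Longrightarrow> x \<noteq> 0 \<Longrightarrow> card {t. w t \<bullet> x = 0} \<le> L"
proof -
  obtain c :: "real \<Rightarrow> 'a" and n :: nat where c: "\<And>s. c s \<in> V" "\<And>s. c s \<noteq> 0"
    and zeros: "\<And>x. x \<in> V \<Longrightarrow> x \<noteq> 0 \<Longrightarrow> finite {s. c s \<bullet> x = 0}"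
      "\<And>x. x \<in> V \<Longrightarrow> x \<noteq> 0 \<Longrightarrow> card {s. c s \<bullet> x = 0} \<le> n"
    using polynomial_curve_in_subspace[OF assms] by blast
  define w where "w t = c (real t) /\<^sub>R norm (c (real t))" for t
  show ?thesis
  proof
    show "w t \<in> V" for t using c assms(1) by (simp add: w_def subspace_scale)
    show "norm (w t) = 1" for t using c by (simp add: w_def)
    fix x assume x: "x \<in> V" "x \<noteq> 0"
    have zeros_eq: "{t. w t \<bullet> x = 0} = real -` {s. c s \<bullet> x = 0} \<inter> UNIV"
      using c by (auto simp: w_def)
    show "finite {t. w t \<bullet> x = 0}"
      unfolding zeros_eq using finite_vimageI[OF zeros(1)[OF x] inj_of_nat] by simp
    show "card {t. w t \<bullet> x = 0} \<le> n"
      unfolding zeros_eq using card_vimage_inj_on_le[OF inj_of_nat zeros(1)[OF x]] zeros(2)[OF x]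
      by (rule le_trans)
  qed
qed

section \<open>Orthogonally invariant random positive semidefinite matrices\<close>

locale orthogonally_invariant_psd = prob_space M for M :: "'w measure" +
  fixes Y :: "'w \<Rightarrow> real^'n^'n"
  assumes measurable_Y [measurable]: "Y \<in> borel_measurable M"
    and psd_Y: "\<And>\<omega>. \<omega> \<in> space M \<Longrightarrow> psd_mat (Y \<omega>)"
    and distr_conj_Y: "\<And>u. orthogonal_matrix u \<Longrightarrow>
      distr M borel (\<lambda>\<omega>. u ** Y \<omega> ** transpose u) = distr M borel Y"
begin

definition rank_stalls :: "real^'n^'n \<Rightarrow> real^'n \<Rightarrow> 'w set" where
  "rank_stalls X v = {\<omega> \<in> space M. rank (X + Y \<omega> + outer v v) = rank (X + Y \<omega>)}"

lemma rank_stalls_event: "rank_stalls X v \<in> events"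
  using measurable_sets[OF measurable_Y sets_rank_add_outer_unchanged[of X v]]
  by (simp add: rank_stalls_def vimage_def Int_def conj_commute)

lemma prob_conj_Y:
  assumes "orthogonal_matrix u" "C \<in> sets borel"
  shows "prob {\<omega> \<in> space M. u ** Y \<omega> ** transpose u \<in> C} = prob {\<omega> \<in> space M. Y \<omega> \<in> C}"
proof -
  have "continuous_on UNIV (\<lambda>y::real^'n^'n. u ** y ** transpose u)"
    unfolding matrix_matrix_mult_def by (intro continuous_intros)
  then have "(\<lambda>\<omega>. u ** Y \<omega> ** transpose u) \<in> borel_measurable M"
    by (intro measurable_compose[OF measurable_Y] borel_measurable_continuous_onI)
  then have "prob {\<omega> \<in> space M. u ** Y \<omega> ** transpose u \<in> C}
      = measure (distr M borel (\<lambda>\<omega>. u ** Y \<omega> ** transpose u)) C"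
    using assms(2) by (simp add: measure_distr vimage_def Int_def conj_commute)
  also have "\<dots> = measure (distr M borel Y) C" using distr_conj_Y[OF assms(1)] by simp
  also have "\<dots> = prob {\<omega> \<in> space M. Y \<omega> \<in> C}"
    using assms(2) by (simp add: measure_distr vimage_def Int_def conj_commute)
  finally show ?thesis .
qed

lemma prob_rank_stalls_eq:
  assumes "psd_mat X" "v \<in> matrix_kernel X" "w \<in> matrix_kernel X" "norm v = norm w"
  shows "prob (rank_stalls X v) = prob (rank_stalls X w)"
proof -
  \<comment> \<open>\<open>w - v \<in> matrix_kernel X\<close>, so the reflection fixes \<open>X\<close> and exchanges \<open>v\<close> and \<open>w\<close>\<close>
  define u where "u = householder (w - v)"
  have orth: "orthogonal_matrix u" by (simp add: u_def orthogonal_matrix_householder)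
  have "w - v \<in> matrix_kernel X"
    using subspace_diff[OF subspace_matrix_kernel assms(3,2)] .
  then have X_fixed: "u ** X ** transpose u = X"
    using assms(1) by (simp add: u_def psd_mat_def matrix_kernel_def householder_conj_fixes)
  have "u *v w = v" using assms(4) by (simp add: u_def householder_swaps)
  then have "u *v v = w" using householder_involutive[of "w - v" w] by (simp add: u_def)
  then have "u ** (X + y + outer v v) ** transpose u = X + u ** y ** transpose u + outer w w"
    and "u ** (X + y) ** transpose u = X + u ** y ** transpose u" for y
    by (simp_all add: matrix_add_ldistrib matrix_add_rdistrib X_fixed
        matrix_mul_outer_mul_transpose)
  then have "rank (X + u ** y ** transpose u + outer w w) = rank (X + y + outer v v)"
    and "rank (X + u ** y ** transpose u) = rank (X + y)" for y
    by (metis rank_orthogonal_conj[OF orth])+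
  then have "rank_stalls X v
      = {\<omega> \<in> space M. u ** Y \<omega> ** transpose u \<in> {y. rank (X + y + outer w w) = rank (X + y)}}"
    by (simp add: rank_stalls_def)
  also have "prob \<dots> = prob (rank_stalls X w)"
    using prob_conj_Y[OF orth sets_rank_add_outer_unchanged[of X w]]
    by (simp add: rank_stalls_def)
  finally show ?thesis .
qed

lemma kernel_vector_orthogonal_to_rank_stalls:
  assumes "psd_mat X" "\<omega> \<in> space M" "rank (X + Y \<omega>) < CARD('n)"
  obtains x where "x \<in> matrix_kernel X" "x \<noteq> 0" "\<And>v. \<omega> \<in> rank_stalls X v \<Longrightarrow> v \<bullet> x = 0"
proof -
  have psd_XY: "psd_mat (X + Y \<omega>)" using assms(1,2) psd_Y psd_mat_add by blast
  obtain x where x: "x \<noteq> 0" "x \<in> matrix_kernel (X + Y \<omega>)"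
    using matrix_nonfull_linear_equations_eq[of "X + Y \<omega>"] assms(3)
    by (auto simp: matrix_kernel_def)
  have "x \<in> matrix_kernel X"
    using x(2) matrix_kernel_psd_add[OF assms(1) psd_Y[OF assms(2)]] by blast
  moreover have "v \<bullet> x = 0" if "\<omega> \<in> rank_stalls X v" for v
    using that x(2) rank_psd_add_outer_eq_iff[OF psd_XY, of v]
    by (auto simp: rank_stalls_def add.assoc)
  ultimately show ?thesis using x(1) that by blast
qed

lemma prob_rank_stalls_eq_0:
  assumes psd_X: "psd_mat X" and w: "w \<in> matrix_kernel X" "norm w = 1"
    and rank_r: "AE \<omega> in M. rank (X + Y \<omega>) = r" and "r < CARD('n)"
  shows "prob (rank_stalls X w) = 0"
proof -
  have "matrix_kernel X \<noteq> {0}" using w by force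
  from unit_curve_in_subspace[OF subspace_matrix_kernel this]
  obtain c :: "nat \<Rightarrow> real^'n" and L :: nat
    where c: "\<And>t. c t \<in> matrix_kernel X" "\<And>t. norm (c t) = 1"
      and zeros: "\<And>x. x \<in> matrix_kernel X \<Longrightarrow> x \<noteq> 0 \<Longrightarrow> finite {t. c t \<bullet> x = 0}"
        "\<And>x. x \<in> matrix_kernel X \<Longrightarrow> x \<noteq> 0 \<Longrightarrow> card {t. c t \<bullet> x = 0} \<le> L"
    by blast
  define G where "G = {\<omega> \<in> space M. rank (X + Y \<omega>) = r}"
  define A where "A t = rank_stalls X (c t) \<inter> G" for t
  have "(\<lambda>\<omega>. rank (X + Y \<omega>)) \<in> M \<rightarrow>\<^sub>M count_space UNIV"
    by (intro measurable_compose[OF measurable_Y] measurable_rank_continuous continuous_intros)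
  then have G_event: "G \<in> events" unfolding G_def by measurable
  have A_event: "A t \<in> events" for t by (simp add: A_def G_event rank_stalls_event sets.Int)
  have "prob (A t) = prob (rank_stalls X (c t))" for t
    using rank_r by (intro measure_eq_AE A_event rank_stalls_event) (auto simp: A_def G_def)
  also have "prob (rank_stalls X (c t)) = prob (rank_stalls X w)" for t
    using c w by (intro prob_rank_stalls_eq psd_X) auto
  finally have prob_A: "prob (A t) = prob (rank_stalls X w)" for t .
  have bounded_overlap: "finite {t. \<omega> \<in> A t} \<and> card {t. \<omega> \<in> A t} \<le> L" for \<omega>
  proof (cases "\<omega> \<in> G")
    case True
    then obtain x where x: "x \<in> matrix_kernel X" "x \<noteq> 0"
      and orth: "\<And>v. \<omega> \<in> rank_stalls X v \<Longrightarrow> v \<bullet> x = 0"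
      using kernel_vector_orthogonal_to_rank_stalls[OF psd_X] \<open>r < CARD('n)\<close>
      by (auto simp: G_def)
    have sub: "{t. \<omega> \<in> A t} \<subseteq> {t. c t \<bullet> x = 0}" using orth by (auto simp: A_def)
    from zeros[OF x] show ?thesis using finite_subset[OF sub] card_mono[OF _ sub] by auto
  qed (simp add: A_def)
  then show ?thesis
    using A_event prob_A by (intro prob_eq_0_if_bounded_overlap[where A = A]) auto
qed

lemma AE_rank_add_outer_Suc:
  assumes psd_X: "psd_mat X" and w: "w \<in> matrix_kernel X" "norm w = 1"
    and rank_r: "AE \<omega> in M. rank (X + Y \<omega>) = r" and "r < CARD('n)"
  shows "AE \<omega> in M. rank (X + Y \<omega> + outer w w) = Suc r"
proof -
  have "AE \<omega> in M. \<omega> \<notin> rank_stalls X w"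
    using prob_rank_stalls_eq_0[OF assms] rank_stalls_event
    by (simp add: AE_iff_null_sets[symmetric] emeasure_eq_measure null_setsI)
  with rank_r AE_space show ?thesis
  proof eventually_elim
    case (elim \<omega>)
    then have psd_XY: "psd_mat (X + Y \<omega>)" and "rank (X + Y \<omega> + outer w w) \<noteq> r"
      using psd_X psd_Y psd_mat_add by (auto simp: rank_stalls_def)
    then show ?case
      using elim rank_psd_add_outer_ge[OF psd_XY, of w] rank_psd_add_outer_le[OF psd_XY, of w]
      by linarith
  qed
qed

lemma AE_rank_outer_sum_add:
  assumes rank_Y: "\<And>\<omega>. \<omega> \<in> space M \<Longrightarrow> rank (Y \<omega>) = b"
    and "finite E" "pairwise orthogonal E" "\<And>e. e \<in> E \<Longrightarrow> norm e = 1"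
  shows "AE \<omega> in M. rank (outer_sum E + Y \<omega>) = min (card E + b) CARD('n)"
  using assms(2-4)
proof (induction E rule: finite_induct)
  case empty
  show ?case
  proof (rule AE_I2)
    fix \<omega> assume "\<omega> \<in> space M"
    then show "rank (outer_sum {} + Y \<omega>) = min (card {} + b) CARD('n)"
      using rank_Y rank_bound[of "Y \<omega>"] by (simp add: outer_sum_def)
  qed
next
  case (insert w E)
  have IH: "AE \<omega> in M. rank (outer_sum E + Y \<omega>) = min (card E + b) CARD('n)"
    using insert.IH insert.prems by (simp add: pairwise_insert)
  have w_kernel: "w \<in> matrix_kernel (outer_sum E)"
    using insert by (auto simp: matrix_kernel_outer_sum pairwise_insert orthogonal_def inner_commute)
  have psd_sum: "psd_mat (outer_sum E + Y \<omega>)" if "\<omega> \<in> space M" for \<omega>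
    using psd_mat_add[OF psd_mat_outer_sum[OF insert.hyps(1)] psd_Y[OF that]] .
  have sum_eq: "outer_sum (insert w E) + Y \<omega> = outer_sum E + Y \<omega> + outer w w" for \<omega>
    using insert.hyps by (simp add: outer_sum_insert add_ac)
  show ?case
  proof (cases "card E + b < CARD('n)")
    case True
    then have "AE \<omega> in M. rank (outer_sum E + Y \<omega> + outer w w) = Suc (card E + b)"
      using IH insert.prems
      by (intro AE_rank_add_outer_Suc psd_mat_outer_sum insert.hyps w_kernel) auto
    then show ?thesis using True insert.hyps by (simp add: sum_eq)
  next
    case False
    with IH have "AE \<omega> in M. rank (outer_sum E + Y \<omega>) = CARD('n)" by simp
    then show ?thesis
      using AE_space
    proof eventually_elim
      case (elim \<omega>)
      then have "rank (outer_sum E + Y \<omega> + outer w w) = CARD('n)"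
        using rank_psd_add_outer_ge[OF psd_sum, of \<omega> w] rank_bound[of "outer_sum E + Y \<omega> + outer w w"]
        by simp
      then show ?case using False insert.hyps by (simp add: sum_eq)
    qed
  qed
qed

lemma AE_rank_psd_add:
  assumes rank_Y: "\<And>\<omega>. \<omega> \<in> space M \<Longrightarrow> rank (Y \<omega>) = b" and "psd_mat X"
  shows "AE \<omega> in M. rank (X + Y \<omega>) = min (rank X + b) CARD('n)"
proof -
  obtain E where E: "E \<subseteq> span (rows X)" "pairwise orthogonal E" "\<And>e. e \<in> E \<Longrightarrow> norm e = 1"
    "independent E" "card E = dim (span (rows X))" "span E = span (rows X)"
    using orthonormal_basis_subspace[OF subspace_span] by metis
  have "finite E" using E(4) by (rule finiteI_independent)
  have "card E = rank X" by (simp add: E(5) row_rank_def)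
  have kernel_eq: "matrix_kernel (outer_sum E) = matrix_kernel X"
    using \<open>finite E\<close> E(6) by (rule matrix_kernel_outer_sum_eq)
  have rank_eq: "rank (X + Y \<omega>) = rank (outer_sum E + Y \<omega>)" if "\<omega> \<in> space M" for \<omega>
    using psd_Y[OF that] \<open>psd_mat X\<close> psd_mat_outer_sum[OF \<open>finite E\<close>] kernel_eq
    by (intro rank_eq_if_matrix_kernel_eq) (simp add: matrix_kernel_psd_add)
  have "AE \<omega> in M. rank (outer_sum E + Y \<omega>) = min (card E + b) CARD('n)"
    using rank_Y \<open>finite E\<close> E(2,3) by (rule AE_rank_outer_sum_add)
  from this AE_space show ?thesis
  proof eventually_elim
    case (elim \<omega>)
    then show ?case using rank_eq[OF elim(2)] \<open>card E = rank X\<close> by (simp only:)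
  qed
qed

lemma AE_add_in_S_rank:
  assumes "\<And>\<omega>. \<omega> \<in> space M \<Longrightarrow> rank (Y \<omega>) = b" "x0 \<in> S_rank a"
  shows "AE \<omega> in M. x0 + Y \<omega> \<in> S_rank (min (a + b) CARD('n))"
proof -
  have "psd_mat x0" "rank x0 = a" using assms(2) by (simp_all add: S_rank_def)
  with assms(1) have "AE \<omega> in M. rank (x0 + Y \<omega>) = min (rank x0 + b) CARD('n)"
    by (intro AE_rank_psd_add)
  with AE_space show ?thesis
    by eventually_elim (simp add: S_rank_def psd_mat_add psd_Y \<open>psd_mat x0\<close> \<open>rank x0 = a\<close>)
qed

end

theorem lemma5p2:
  fixes M :: "'w measure" and Y :: "'w \<Rightarrow> real^'d^'d" and b :: nat
  assumes "prob_space M"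
    and "Y \<in> borel_measurable M"
    and "\<forall>\<omega>\<in>space M. Y \<omega> \<in> S_rank b"
    and "\<forall>u :: real^'d^'d. orthogonal_matrix u \<longrightarrow>
           distr M borel (\<lambda>\<omega>. u ** Y \<omega> ** transpose u) = distr M borel Y"
  shows "(\<forall>a x0. x0 \<in> S_rank a \<longrightarrow>
            (a + b \<le> CARD('d) \<longrightarrow> (AE \<omega> in M. x0 + Y \<omega> \<in> S_rank (a + b))) \<and>
            (a + b \<ge> CARD('d) \<longrightarrow> (AE \<omega> in M. x0 + Y \<omega> \<in> S_rank CARD('d))))
       \<and> (\<forall>a c x0. x0 \<in> S_rank c \<longrightarrow> a + b < CARD('d) \<longrightarrow>
            (AE \<omega> in M. x0 + Y \<omega> \<in> S_rank (a + b)) \<longrightarrow> c = a)"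
proof -
  have "orthogonally_invariant_psd M Y"
  proof (intro orthogonally_invariant_psd.intro orthogonally_invariant_psd_axioms.intro)
    show "psd_mat (Y \<omega>)" if "\<omega> \<in> space M" for \<omega>
      using assms(3) that by (simp add: S_rank_def)
  qed (use assms in auto)
  then interpret orthogonally_invariant_psd M Y .
  have rank_Y: "\<And>\<omega>. \<omega> \<in> space M \<Longrightarrow> rank (Y \<omega>) = b"
    using assms(3) by (simp add: S_rank_def)
  have AE_S_rank: "AE \<omega> in M. x0 + Y \<omega> \<in> S_rank (min (a + b) CARD('d))"
    if "x0 \<in> S_rank a" for a x0
    using rank_Y that by (rule AE_add_in_S_rank)
  show ?thesis
  proof (intro conjI allI impI)
    fix a :: nat and x0 :: "real^'d^'d" assume "x0 \<in> S_rank a"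
    from AE_S_rank[OF this]
    show "AE \<omega> in M. x0 + Y \<omega> \<in> S_rank (a + b)" if "a + b \<le> CARD('d)"
      using that by (simp add: min_absorb1)
    from AE_S_rank[OF \<open>x0 \<in> S_rank a\<close>]
    show "AE \<omega> in M. x0 + Y \<omega> \<in> S_rank CARD('d)" if "a + b \<ge> CARD('d)"
      using that by (simp add: min_absorb2)
  next
    fix a c :: nat and x0 :: "real^'d^'d"
    assume "x0 \<in> S_rank c" "a + b < CARD('d)" "AE \<omega> in M. x0 + Y \<omega> \<in> S_rank (a + b)"
    from \<open>AE \<omega> in M. x0 + Y \<omega> \<in> S_rank (a + b)\<close> AE_S_rank[OF \<open>x0 \<in> S_rank c\<close>]
    have "AE \<omega> in M. a + b = min (c + b) CARD('d)"
      by eventually_elim (simp add: S_rank_def)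
    then show "c = a" using \<open>a + b < CARD('d)\<close> by (auto simp: min_def split: if_splits)
  qed
qed

end
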